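(* Let $f\in A[X]$ be monic with discriminant $\Delta=\mathrm{Res}_X(f,f')\neq 0$, and let $r=v(\Delta)$. Then the number of roots of $f$ in $K$ is at most $q^{\lfloor r/2\rfloor+1}$.
   Context: $K$ is a field complete with respect to a non-archimedean discrete valuation $v$, normalized by $v(\pi)=1$ for a uniformizer $\pi$ of the valuation ring $A=\{x\in K: v(x)\geq 0\}$; the residue field $A/\pi A$ is finite with $q$ elements. *)

theory Defs
  imports "HOL-Computational_Algebra.Polynomial" "Subresultants.Resultant_Prelim"
begin

text \<open>A discrete valuation on a field, given on nonzero elements (v 0 is irrelevant,
  morally +infinity), normalized so that some element (a uniformizer) has valuation 1.\<close>
definition normalized_discrete_valuation :: "('a::field \<Rightarrow> int) \<Rightarrow> bool" where
  "normalized_discrete_valuation v \<longleftrightarrow>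
     (\<forall>x y. x \<noteq> 0 \<longrightarrow> y \<noteq> 0 \<longrightarrow> v (x * y) = v x + v y) \<and>
     (\<forall>x y. x \<noteq> 0 \<longrightarrow> y \<noteq> 0 \<longrightarrow> x + y \<noteq> 0 \<longrightarrow> v (x + y) \<ge> min (v x) (v y)) \<and>
     (\<exists>\<pi>. \<pi> \<noteq> 0 \<and> v \<pi> = 1)"

definition val_ring :: "('a::field \<Rightarrow> int) \<Rightarrow> 'a set" where
  "val_ring v = {x. x = 0 \<or> 0 \<le> v x}"

definition val_complete :: "('a::field \<Rightarrow> int) \<Rightarrow> bool" where
  "val_complete v \<longleftrightarrow>
     (\<forall>s :: nat \<Rightarrow> 'a.
        (\<forall>n::int. \<exists>N. \<forall>m\<ge>N. \<forall>k\<ge>N. s m = s k \<or> v (s m - s k) \<ge> n) \<longrightarrow>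
        (\<exists>L. \<forall>n::int. \<exists>N. \<forall>m\<ge>N. s m = L \<or> v (s m - L) \<ge> n))"

text \<open>The residue field A / \<pi>A: classes of A modulo the relation x - y \<in> \<pi>A,
  i.e. x = y or v (x - y) \<ge> 1.\<close>
definition residue_rel :: "('a::field \<Rightarrow> int) \<Rightarrow> ('a \<times> 'a) set" where
  "residue_rel v = {(x, y). x \<in> val_ring v \<and> y \<in> val_ring v \<and> (x = y \<or> 1 \<le> v (x - y))}"

definition residue_field :: "('a::field \<Rightarrow> int) \<Rightarrow> 'a set set" where
  "residue_field v = val_ring v // residue_rel v"

end

theory Submission
  imports Defs
begin

(* Let a, b be distinct roots of f and write f = (X - a) (X - b) g. Because
   Res((X - a) P, G) = G(a) Res(P, G), the discriminant factors as
   Delta = -(a - b)^2 g(a) g(b) Res(g, f'), where every factor except (a - b)^2 is integral;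
   hence 2 v(a - b) <= r. The roots of the monic integral polynomial f are integral, so they are
   elements of A that are pairwise distinct modulo pi^(floor(r/2) + 1). Their first
   floor(r/2) + 1 pi-adic digits therefore determine them, and there are q choices for each digit. *)

lemma synthetic_div_add:
  "synthetic_div (p + q) c = synthetic_div p c + synthetic_div (q :: 'a::comm_ring_1 poly) c"
proof -
  have "(p + q) + smult c (synthetic_div p c + synthetic_div q c)
      = pCons (poly p c + poly q c) (synthetic_div p c + synthetic_div q c)"
  proof -
    have "(p + q) + smult c (synthetic_div p c + synthetic_div q c)
        = (p + smult c (synthetic_div p c)) + (q + smult c (synthetic_div q c))"
      by (simp add: smult_add_right algebra_simps)
    then show ?thesis
      using synthetic_div_correct[of p c] synthetic_div_correct[of q c] by simp
  qed
  from synthetic_div_unique[OF this] show ?thesis by simp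
qed

lemma synthetic_div_smult:
  "synthetic_div (smult a p) c = smult a (synthetic_div (p :: 'a::comm_ring_1 poly) c)"
proof -
  have "smult a p + smult c (smult a (synthetic_div p c))
      = pCons (a * poly p c) (smult a (synthetic_div p c))"
    using arg_cong[OF synthetic_div_correct[of p c], of "smult a"]
    by (simp add: smult_add_right algebra_simps)
  from synthetic_div_unique[OF this] show ?thesis by simp
qed

lemma synthetic_div_sum:
  "synthetic_div (sum f S) c = (\<Sum>i\<in>S. synthetic_div (f i :: 'a::comm_ring_1 poly) c)"
  by (induct S rule: infinite_finite_induct) (auto simp: synthetic_div_add)

lemma synthetic_div_linear_factor:
  "synthetic_div ([:-c, 1:] * p) c = (p :: 'a::comm_ring_1 poly)"
proof -
  have "[:-c, 1:] * p + smult c p = pCons 0 p" by (simp add: algebra_simps)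
  from synthetic_div_unique[OF this] show ?thesis by simp
qed

lemma coeff_synthetic_div_degree:
  "degree p \<ge> 1 \<Longrightarrow> coeff (synthetic_div p c) (degree p - 1) = lead_coeff (p :: 'a::comm_ring_1 poly)"
proof (induct p)
  case (pCons a p)
  then show ?case
    by (cases "degree p") (auto simp: degree_synthetic_div synthetic_div_eq_0_iff elim: degree_eq_zeroE)
qed simp

definition sylvester_row :: "'a::comm_ring_1 poly \<Rightarrow> 'a poly \<Rightarrow> nat \<Rightarrow> 'a poly" where
  "sylvester_row p q i = (if i < degree q then monom 1 (degree q - 1 - i) * p
     else monom 1 (degree p + degree q - 1 - i) * q)"

lemma sylvester_mat_index_row:
  assumes "i < degree p + degree q" "j < degree p + degree q"
  shows "sylvester_mat p q $$ (i,j) = coeff (sylvester_row p q i) (degree p + degree q - 1 - j)"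
  using assms by (auto simp: sylvester_row_def sylvester_index_mat coeff_monom_mult coeff_eq_0)

lemma degree_sylvester_row:
  assumes "i < degree p + degree q"
  shows "degree (sylvester_row p q i) < degree p + degree q"
proof (cases "i < degree q")
  case True
  have "degree (monom 1 (degree q - 1 - i) * p) \<le> degree q - 1 - i + degree p"
    using degree_mult_le[of "monom 1 (degree q - 1 - i)" p] by (simp add: degree_monom_eq)
  then show ?thesis using True by (simp add: sylvester_row_def)
next
  case False
  have "degree (monom 1 (degree p + degree q - 1 - i) * q) \<le> degree p + degree q - 1 - i + degree q"
    using degree_mult_le[of "monom 1 (degree p + degree q - 1 - i)" q] by (simp add: degree_monom_eq)
  then show ?thesis using False assms by (simp add: sylvester_row_def)
qed

lemma det_upper_unitriangular:
  assumes "A \<in> carrier_mat n n" "upper_triangular A" "\<And>i. i < n \<Longrightarrow> A $$ (i,i) = 1"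
  shows "det A = 1"
proof -
  have "det A = (\<Prod>i = 0..<n. A $$ (i,i))"
    using det_upper_triangular[OF assms(2,1)] assms(1) by (simp add: prod_list_diag_prod)
  also have "\<dots> = 1" using assms(3) by simp
  finally show ?thesis .
qed

(* For degree Q < N, the values factor_coord a N j Q (j < N) are the coordinates of Q
   in the basis X^(N-2) (X - a), ..., X (X - a), X - a, 1. *)
definition factor_coord :: "'a::comm_ring_1 \<Rightarrow> nat \<Rightarrow> nat \<Rightarrow> 'a poly \<Rightarrow> 'a" where
  "factor_coord a N j Q = (if j < N - 1 then coeff (synthetic_div Q a) (N - 2 - j) else poly Q a)"

lemma factor_coord_diff:
  "factor_coord a N j (Q1 - smult b Q2) = factor_coord a N j Q1 - b * factor_coord a N j Q2"
proof -
  have diff: "Q1 - smult b Q2 = Q1 + smult (-b) Q2" by simp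
  show ?thesis unfolding factor_coord_def diff synthetic_div_add synthetic_div_smult by simp
qed

lemma factor_coord_linear_factor:
  "factor_coord a N j (W * [:-a, 1:]) = (if j < N - 1 then coeff W (N - 2 - j) else 0)"
  unfolding factor_coord_def mult.commute[of W] synthetic_div_linear_factor by simp

lemma factor_coord_expand:
  assumes "degree Q < N"
  shows "(\<Sum>l<N. coeff Q (N - 1 - l) * factor_coord a N j (monom 1 (N - 1 - l))) = factor_coord a N j Q"
proof -
  have Q: "Q = (\<Sum>k<N. smult (coeff Q k) (monom 1 k))"
  proof -
    have "Q = (\<Sum>k\<le>N - 1. monom (coeff Q k) k)"
      by (rule poly_as_sum_of_monoms'[symmetric]) (use assms in linarith)
    moreover have "{..N - 1} = {..<N}" using assms by auto
    ultimately show ?thesis by (simp add: smult_monom)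
  qed
  have "(\<Sum>l<N. coeff Q (N - 1 - l) * factor_coord a N j (monom 1 (N - 1 - l)))
      = (\<Sum>k<N. coeff Q k * factor_coord a N j (monom 1 k))"
    using sum.nat_diff_reindex[of "\<lambda>k. coeff Q k * factor_coord a N j (monom 1 k)" N] by simp
  also have "\<dots> = factor_coord a N j Q"
    by (subst (2) Q) (auto simp: factor_coord_def synthetic_div_sum synthetic_div_smult coeff_sum poly_sum)
  finally show ?thesis .
qed

definition factor_basis_mat :: "'a::comm_ring_1 \<Rightarrow> nat \<Rightarrow> 'a mat" where
  "factor_basis_mat a N = mat N N (\<lambda>(l,j). factor_coord a N j (monom 1 (N - 1 - l)))"

lemma det_factor_basis_mat: "det (factor_basis_mat a N) = 1"
proof (rule det_upper_unitriangular)
  show "factor_basis_mat a N \<in> carrier_mat N N" by (simp add: factor_basis_mat_def)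
  show "upper_triangular (factor_basis_mat a N)"
  proof (rule upper_triangularI)
    fix l j assume jl: "j < l" and "l < dim_row (factor_basis_mat a N)"
    then have "l < N" by (simp add: factor_basis_mat_def)
    then have "degree (synthetic_div (monom 1 (N - 1 - l) :: 'a poly) a) < N - 2 - j \<or>
        synthetic_div (monom 1 (N - 1 - l) :: 'a poly) a = 0"
      using jl by (auto simp: degree_synthetic_div degree_monom_eq synthetic_div_eq_0_iff)
    then show "factor_basis_mat a N $$ (l, j) = 0"
      using jl \<open>l < N\<close> by (auto simp: factor_basis_mat_def factor_coord_def coeff_eq_0)
  qed
  fix i assume i: "i < N"
  show "factor_basis_mat a N $$ (i,i) = 1"
  proof (cases "i < N - 1")
    case True
    then have "coeff (synthetic_div (monom 1 (N - 1 - i) :: 'a poly) a) (N - 2 - i) = 1"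
      using coeff_synthetic_div_degree[of "monom (1::'a) (N - 1 - i)" a]
      by (simp add: degree_monom_eq numeral_2_eq_2)
    then show ?thesis using True i by (simp add: factor_basis_mat_def factor_coord_def)
  qed (use i in \<open>simp add: factor_basis_mat_def factor_coord_def\<close>)
qed

lemma coeff_mat_mult_factor_basis_mat:
  assumes "\<And>i. i < N \<Longrightarrow> degree (\<rho> i) < N"
  shows "mat N N (\<lambda>(i,j). coeff (\<rho> i) (N - 1 - j)) * factor_basis_mat a N
    = mat N N (\<lambda>(i,j). factor_coord a N j (\<rho> i))" (is "?C * _ = ?R")
proof (rule eq_matI)
  fix i j assume "i < dim_row ?R" "j < dim_col ?R"
  then have ij: "i < N" "j < N" by auto
  have "(?C * factor_basis_mat a N) $$ (i,j)
      = (\<Sum>l<N. coeff (\<rho> i) (N - 1 - l) * factor_coord a N j (monom 1 (N - 1 - l)))"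
    using ij by (simp add: factor_basis_mat_def scalar_prod_def lessThan_atLeast0)
  also have "\<dots> = factor_coord a N j (\<rho> i)" by (rule factor_coord_expand[OF assms[OF ij(1)]])
  finally show "(?C * factor_basis_mat a N) $$ (i,j) = ?R $$ (i,j)" using ij by simp
qed (auto simp: factor_basis_mat_def)

definition row_reduce_mat :: "'a::comm_ring_1 \<Rightarrow> nat \<Rightarrow> nat \<Rightarrow> 'a mat" where
  "row_reduce_mat a m N =
     mat N N (\<lambda>(i,k). if k = i then 1 else if m \<le> i \<and> Suc i < N \<and> k = Suc i then -a else 0)"

lemma det_row_reduce_mat: "det (row_reduce_mat a m N) = 1"
  by (rule det_upper_unitriangular) (auto simp: row_reduce_mat_def)

lemma row_reduce_mat_mult:
  "row_reduce_mat a m N * mat N N f =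
     mat N N (\<lambda>(i,j). if m \<le> i \<and> Suc i < N then f (i,j) - a * f (Suc i, j) else f (i,j))"
  (is "_ = ?R")
proof (rule eq_matI)
  fix i j assume "i < dim_row ?R" "j < dim_col ?R"
  then have ij: "i < N" "j < N" by auto
  have "(row_reduce_mat a m N * mat N N f) $$ (i,j) = (\<Sum>k<N. (if k = i then f (k,j) else 0) +
      (if m \<le> i \<and> Suc i < N \<and> k = Suc i then - a * f (k,j) else 0))"
    using ij by (auto simp: row_reduce_mat_def scalar_prod_def lessThan_atLeast0 intro!: sum.cong)
  also have "\<dots> = ?R $$ (i,j)"
    using ij by (auto simp: sum.distrib)
  finally show "(row_reduce_mat a m N * mat N N f) $$ (i,j) = ?R $$ (i,j)" .
qed (auto simp: row_reduce_mat_def)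

lemma degree_linear_factor_mult:
  "P \<noteq> 0 \<Longrightarrow> degree ([:-a, 1:] * P) = Suc (degree (P :: 'a::idom poly))"
  by (subst degree_mult_eq) auto

lemma factor_coord_sylvester_row:
  fixes P G :: "'a::idom poly" and a :: 'a
  defines "F \<equiv> [:-a, 1:] * P" and "N \<equiv> Suc (degree P + degree G)"
  assumes "P \<noteq> 0" and "i < N"
  shows "(if degree G \<le> i \<and> Suc i < N
          then factor_coord a N j (sylvester_row F G i)
               - a * factor_coord a N j (sylvester_row F G (Suc i))
          else factor_coord a N j (sylvester_row F G i))
       = (if i < N - 1 then (if j < N - 1 then coeff (sylvester_row P G i) (N - 2 - j) else 0)
          else factor_coord a N j G)"
proof -
  have dF: "degree F = Suc (degree P)"
    unfolding F_def using \<open>P \<noteq> 0\<close> by (rule degree_linear_factor_mult)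
  consider (P_rows) "i < degree G" | (G_rows) "degree G \<le> i" "Suc i < N" | (last) "i = N - 1"
    using \<open>i < N\<close> by linarith
  then show ?thesis
  proof cases
    case P_rows
    then have "sylvester_row F G i = monom 1 (degree G - 1 - i) * ([:-a, 1:] * P)"
      by (simp add: sylvester_row_def F_def)
    also have "\<dots> = (monom 1 (degree G - 1 - i) * P) * [:-a, 1:]"
      by (simp only: ac_simps)
    finally have "factor_coord a N j (sylvester_row F G i)
        = (if j < N - 1 then coeff (monom 1 (degree G - 1 - i) * P) (N - 2 - j) else 0)"
      by (simp only: factor_coord_linear_factor)
    then show ?thesis using P_rows by (simp add: sylvester_row_def N_def)
  next
    case G_rows
    have "N - 1 - i = Suc (N - 2 - i)" "N - 1 - Suc i = N - 2 - i" using G_rows by auto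
    then have "sylvester_row F G i - smult a (sylvester_row F G (Suc i))
        = (monom 1 (N - 2 - i) * G) * [:-a, 1:]"
      using G_rows by (simp add: sylvester_row_def dF N_def monom_Suc algebra_simps)
    then have "factor_coord a N j (sylvester_row F G i)
          - a * factor_coord a N j (sylvester_row F G (Suc i))
        = (if j < N - 1 then coeff (monom 1 (N - 2 - i) * G) (N - 2 - j) else 0)"
      by (simp only: factor_coord_diff[symmetric] factor_coord_linear_factor)
    then show ?thesis using G_rows by (simp add: sylvester_row_def N_def)
  next
    case last
    then show ?thesis by (simp add: sylvester_row_def dF N_def)
  qed
qed

(* In the coordinates factor_coord, subtracting a times the next row from each but the last
   G-row makes every row of the Sylvester matrix of (X - a) P and G except the last a multiple
   of X - a; the result is block triangular with diagonal blocks sylvester_mat P G and G(a). *)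
lemma resultant_linear_factor_left:
  fixes P G :: "'a::idom poly"
  assumes "P \<noteq> 0"
  shows "resultant ([:-a, 1:] * P) G = poly G a * resultant P G"
proof -
  define F where "F = [:-a, 1:] * P"
  define N where "N = Suc (degree P + degree G)"
  have dF: "degree F = Suc (degree P)"
    unfolding F_def using assms by (rule degree_linear_factor_mult)
  have S: "sylvester_mat F G = mat N N (\<lambda>(i,j). coeff (sylvester_row F G i) (N - 1 - j))"
    by (rule eq_matI) (auto simp: sylvester_mat_index_row dF N_def)
  define M where "M = row_reduce_mat a (degree G) N * (sylvester_mat F G * factor_basis_mat a N)"
  have M: "M = mat N N (\<lambda>(i,j). if i < N - 1
      then (if j < N - 1 then coeff (sylvester_row P G i) (N - 2 - j) else 0)
      else factor_coord a N j G)"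
  proof -
    have ST: "mat N N (\<lambda>(i,j). coeff (sylvester_row F G i) (N - 1 - j)) * factor_basis_mat a N
        = mat N N (\<lambda>(i,j). factor_coord a N j (sylvester_row F G i))"
      using degree_sylvester_row[of _ F G]
      by (intro coeff_mat_mult_factor_basis_mat) (simp add: dF N_def)
    show ?thesis
      unfolding M_def S ST row_reduce_mat_mult
      by (rule cong_mat) (simp_all only: prod.case
          factor_coord_sylvester_row[where a = a and G = G, OF assms, folded F_def N_def])
  qed
  have "resultant F G = det M"
  proof -
    have "row_reduce_mat a (degree G) N \<in> carrier_mat N N" "sylvester_mat F G \<in> carrier_mat N N"
        "factor_basis_mat a N \<in> carrier_mat N N"
      by (simp_all add: row_reduce_mat_def S factor_basis_mat_def)
    then show ?thesis
      unfolding M_def resultant_def by (simp add: det_mult det_row_reduce_mat det_factor_basis_mat)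
  qed
  also have "\<dots> = (\<Sum>i<N. M $$ (i, N - 1) * cofactor M i (N - 1))"
    by (rule laplace_expansion_column) (auto simp: M N_def)
  also have "\<dots> = poly G a * cofactor M (N - 1) (N - 1)"
    by (subst sum.remove[of _ "N - 1"]) (auto simp: M N_def factor_coord_def intro!: sum.neutral)
  also have "cofactor M (N - 1) (N - 1) = det (sylvester_mat P G)"
    unfolding cofactor_def
    by (auto simp: M N_def mat_delete_def sylvester_mat_index_row intro!: arg_cong[of _ _ det] eq_matI)
  finally show ?thesis unfolding F_def resultant_def .
qed

lemma resultant_pderiv_two_linear_factors:
  fixes g :: "'a::idom poly"
  assumes f: "f = [:-a, 1:] * ([:-b, 1:] * g)" and "g \<noteq> 0"
  shows "resultant f (pderiv f) = - ((a - b) ^ 2 * (poly g a * poly g b * resultant g (pderiv f)))"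
proof -
  have "[:-b, 1:] * g \<noteq> 0" using \<open>g \<noteq> 0\<close> by (simp only: mult_eq_0_iff) simp
  then have "resultant f (pderiv f) = poly (pderiv f) a * resultant ([:-b, 1:] * g) (pderiv f)"
    unfolding f by (rule resultant_linear_factor_left)
  also have "resultant ([:-b, 1:] * g) (pderiv f) = poly (pderiv f) b * resultant g (pderiv f)"
    using \<open>g \<noteq> 0\<close> by (rule resultant_linear_factor_left)
  also have "poly (pderiv f) a = (a - b) * poly g a"
    unfolding f pderiv_mult by (simp add: pderiv_pCons algebra_simps)
  also have "poly (pderiv f) b = (b - a) * poly g b"
    unfolding f pderiv_mult by (simp add: pderiv_pCons algebra_simps)
  finally show ?thesis by (simp add: algebra_simps power2_eq_square)
qed

context
  fixes v :: "'a::field \<Rightarrow> int"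
  assumes valuation: "normalized_discrete_valuation v"
begin

lemma val_mult: "x \<noteq> 0 \<Longrightarrow> y \<noteq> 0 \<Longrightarrow> v (x * y) = v x + v y"
  using valuation unfolding normalized_discrete_valuation_def by blast

lemma val_add_ge_min: "x \<noteq> 0 \<Longrightarrow> y \<noteq> 0 \<Longrightarrow> x + y \<noteq> 0 \<Longrightarrow> min (v x) (v y) \<le> v (x + y)"
  using valuation unfolding normalized_discrete_valuation_def by blast

lemma val_one: "v 1 = 0"
  using val_mult[of 1 1] by simp

lemma val_minus: "v (- x) = v x"
proof (cases "x = 0")
  case False
  have "v 1 = v (-1) + v (-1)" using val_mult[of "-1" "-1"] by simp
  then have "v (-1) = 0" by (simp add: val_one)
  then show ?thesis using False val_mult[of "-1" x] by simp
qed simp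

lemma val_power: "x \<noteq> 0 \<Longrightarrow> v (x ^ n) = int n * v x"
  by (induct n) (auto simp: val_one val_mult algebra_simps)

lemma val_divide: "x \<noteq> 0 \<Longrightarrow> y \<noteq> 0 \<Longrightarrow> v (x / y) = v x - v y"
  using val_mult[of "x / y" y] by simp

lemma val_sum_ge:
  assumes "finite S" "\<And>i. i \<in> S \<Longrightarrow> f i = 0 \<or> k \<le> v (f i)"
  shows "sum f S = 0 \<or> k \<le> v (sum f S)"
  using assms
proof (induct S rule: finite_induct)
  case (insert x S)
  then have "f x = 0 \<or> k \<le> v (f x)" "sum f S = 0 \<or> k \<le> v (sum f S)" by auto
  moreover have "min (v (f x)) (v (sum f S)) \<le> v (f x + sum f S)"
    if "f x \<noteq> 0" "sum f S \<noteq> 0" "f x + sum f S \<noteq> 0"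
    using that by (rule val_add_ge_min)
  ultimately show ?case using insert by fastforce
qed simp

lemma val_ring_add: "x \<in> val_ring v \<Longrightarrow> y \<in> val_ring v \<Longrightarrow> x + y \<in> val_ring v"
  using val_sum_ge[of "{0::nat, 1}" "\<lambda>i. if i = 0 then x else y" 0] unfolding val_ring_def by auto

lemma val_ring_mult: "x \<in> val_ring v \<Longrightarrow> y \<in> val_ring v \<Longrightarrow> x * y \<in> val_ring v"
  unfolding val_ring_def by (cases "x = 0"; cases "y = 0") (auto simp: val_mult)

lemma val_ring_minus: "x \<in> val_ring v \<Longrightarrow> - x \<in> val_ring v"
  unfolding val_ring_def by (auto simp: val_minus)

lemma val_ring_diff: "x \<in> val_ring v \<Longrightarrow> y \<in> val_ring v \<Longrightarrow> x - y \<in> val_ring v"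
  using val_ring_add[of x "- y"] val_ring_minus[of y] by simp

lemma val_ring_one: "1 \<in> val_ring v" and val_ring_zero: "0 \<in> val_ring v"
  unfolding val_ring_def by (auto simp: val_one)

lemma val_ring_of_nat: "of_nat n \<in> val_ring v"
  by (induct n) (auto simp: val_ring_zero val_ring_one val_ring_add)

lemma val_ring_of_int: "of_int n \<in> val_ring v"
proof (cases "0 \<le> n")
  case True
  then show ?thesis using val_ring_of_nat[of "nat n"] by simp
next
  case False
  then show ?thesis using val_ring_minus[OF val_ring_of_nat[of "nat (- n)"]] by simp
qed

lemma val_ring_sum: "(\<And>i. i \<in> S \<Longrightarrow> f i \<in> val_ring v) \<Longrightarrow> sum f S \<in> val_ring v"
  by (induct S rule: infinite_finite_induct) (auto simp: val_ring_zero val_ring_add)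

lemma val_ring_prod: "(\<And>i. i \<in> S \<Longrightarrow> f i \<in> val_ring v) \<Longrightarrow> prod f S \<in> val_ring v"
  by (induct S rule: infinite_finite_induct) (auto simp: val_ring_one val_ring_mult)

lemma val_ring_power: "x \<in> val_ring v \<Longrightarrow> x ^ n \<in> val_ring v"
  by (induct n) (auto simp: val_ring_one val_ring_mult)

lemma poly_in_val_ring:
  "(\<And>i. coeff p i \<in> val_ring v) \<Longrightarrow> x \<in> val_ring v \<Longrightarrow> poly p x \<in> val_ring v"
  unfolding poly_altdef by (intro val_ring_sum val_ring_mult val_ring_power) auto

lemma coeff_pderiv_in_val_ring:
  "(\<And>i. coeff p i \<in> val_ring v) \<Longrightarrow> coeff (pderiv p) i \<in> val_ring v"
  unfolding coeff_pderiv by (intro val_ring_mult val_ring_of_nat)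

lemma coeff_synthetic_div_in_val_ring:
  "(\<And>i. coeff p i \<in> val_ring v) \<Longrightarrow> x \<in> val_ring v \<Longrightarrow> coeff (synthetic_div p x) i \<in> val_ring v"
proof (induct p arbitrary: i)
  case (pCons a p)
  have "coeff p j \<in> val_ring v" for j using pCons(3)[of "Suc j"] by simp
  then show ?case
    using pCons(2,4) poly_in_val_ring[of p x] by (cases i) auto
qed (simp add: val_ring_zero)

lemma det_in_val_ring:
  "(\<And>i j. i < dim_row M \<Longrightarrow> j < dim_col M \<Longrightarrow> M $$ (i,j) \<in> val_ring v) \<Longrightarrow> det M \<in> val_ring v"
  unfolding det_def
  by (auto intro!: val_ring_sum val_ring_mult val_ring_prod val_ring_of_int val_ring_zero
      simp: permutes_def)

lemma resultant_in_val_ring: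
  "(\<And>i. coeff p i \<in> val_ring v) \<Longrightarrow> (\<And>i. coeff q i \<in> val_ring v) \<Longrightarrow> resultant p q \<in> val_ring v"
  unfolding resultant_def by (rule det_in_val_ring) (auto simp: sylvester_index_mat val_ring_zero)

lemma root_in_val_ring:
  assumes coeffs: "\<And>i. coeff f i \<in> val_ring v" and "monic f" and "poly f x = 0"
  shows "x \<in> val_ring v"
proof (rule ccontr)
  assume "x \<notin> val_ring v"
  then have "x \<noteq> 0" and vx: "v x < 0" unfolding val_ring_def by auto
  define n where "n = degree f"
  define s where "s = (\<Sum>i<n. coeff f i * x ^ i)"
  have "poly f x = s + x ^ n"
    using \<open>monic f\<close> unfolding poly_altdef s_def n_def by (simp add: lessThan_Suc_atMost[symmetric])
  then have "x ^ n = - s" using \<open>poly f x = 0\<close> by (simp add: eq_neg_iff_add_eq_0 add.commute)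
  moreover have "s = 0 \<or> int n * v x + 1 \<le> v s"
    unfolding s_def
  proof (rule val_sum_ge)
    fix i assume "i \<in> {..<n}"
    then have "int n * v x + 1 \<le> int i * v x"
      using vx mult_right_mono_neg[of "int i" "int n - 1" "v x"] by (simp add: algebra_simps)
    moreover have "0 \<le> v (coeff f i)" if "coeff f i \<noteq> 0"
      using coeffs[of i] that unfolding val_ring_def by auto
    ultimately show "coeff f i * x ^ i = 0 \<or> int n * v x + 1 \<le> v (coeff f i * x ^ i)"
      using \<open>x \<noteq> 0\<close> by (cases "coeff f i = 0") (simp_all add: val_mult val_power)
  qed simp
  ultimately show False
    using \<open>x \<noteq> 0\<close> val_power[of x n] by (auto simp: val_minus)
qed

lemma val_diff_roots_le:
  assumes coeffs: "\<And>i. coeff f i \<in> val_ring v" and "monic f"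
    and disc: "resultant f (pderiv f) \<noteq> 0"
    and "poly f a = 0" "poly f b = 0" "a \<noteq> b"
  shows "2 * v (a - b) \<le> v (resultant f (pderiv f))"
proof -
  have a: "a \<in> val_ring v" and b: "b \<in> val_ring v"
    using root_in_val_ring[OF coeffs \<open>monic f\<close>] assms(4,5) by auto
  define h where "h = synthetic_div f a"
  define g where "g = synthetic_div h b"
  have f_h: "f = [:-a, 1:] * h"
    using synthetic_div_correct'[of a f] \<open>poly f a = 0\<close> unfolding h_def by simp
  then have "poly h b = 0" using \<open>poly f b = 0\<close> \<open>a \<noteq> b\<close> by simp
  then have f_g: "f = [:-a, 1:] * ([:-b, 1:] * g)"
    using f_h synthetic_div_correct'[of b h] unfolding g_def by simp
  have g_coeffs: "coeff g i \<in> val_ring v" for i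
    unfolding g_def h_def by (intro coeff_synthetic_div_in_val_ring a b coeffs)
  define u where "u = poly g a * poly g b * resultant g (pderiv f)"
  have "g \<noteq> 0" using f_g \<open>monic f\<close> by auto
  then have disc_eq: "resultant f (pderiv f) = - ((a - b) ^ 2 * u)"
    unfolding u_def by (rule resultant_pderiv_two_linear_factors[OF f_g])
  have "u \<in> val_ring v" unfolding u_def
    by (intro val_ring_mult poly_in_val_ring resultant_in_val_ring coeff_pderiv_in_val_ring
        g_coeffs coeffs a b)
  moreover have "u \<noteq> 0" using disc disc_eq by auto
  ultimately have "0 \<le> v u" unfolding val_ring_def by auto
  moreover have "v (resultant f (pderiv f)) = 2 * v (a - b) + v u"
    using \<open>a \<noteq> b\<close> \<open>u \<noteq> 0\<close> by (simp add: disc_eq val_minus val_mult val_power)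
  ultimately show ?thesis by simp
qed

lemma residue_representatives:
  assumes "finite (residue_field v)"
  obtains R where "finite R" "card R \<le> card (residue_field v)"
    "\<And>y. y \<in> val_ring v \<Longrightarrow> \<exists>r\<in>R. y = r \<or> 1 \<le> v (y - r)"
proof -
  define R where "R = (\<lambda>C. SOME z. z \<in> C) ` residue_field v"
  have "\<exists>r\<in>R. y = r \<or> 1 \<le> v (y - r)" if y: "y \<in> val_ring v" for y
  proof -
    define C where "C = residue_rel v `` {y}"
    have "C \<in> residue_field v"
      unfolding C_def residue_field_def using y by (rule quotientI)
    define r where "r = (SOME z. z \<in> C)"
    have "r \<in> R" unfolding R_def r_def using \<open>C \<in> residue_field v\<close> by (rule imageI)
    have "y \<in> C" using y by (simp add: C_def residue_rel_def)
    then have "r \<in> C" unfolding r_def by (rule someI)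
    then have "(y, r) \<in> residue_rel v" by (simp add: C_def)
    then show ?thesis using \<open>r \<in> R\<close> by (auto simp: residue_rel_def)
  qed
  moreover have "finite R" "card R \<le> card (residue_field v)"
    unfolding R_def using assms by (auto intro: card_image_le)
  ultimately show ?thesis using that by blast
qed

lemma divide_uniformizer_in_val_ring:
  assumes "v \<pi> = 1" "\<pi> \<noteq> 0" "y = 0 \<or> 1 \<le> v y"
  shows "y / \<pi> \<in> val_ring v"
  using assms val_divide[of y \<pi>] by (cases "y = 0") (auto simp: val_ring_def)

lemma uniformizer_expansion:
  assumes "v \<pi> = 1" "\<pi> \<noteq> 0" and R: "\<And>y. y \<in> val_ring v \<Longrightarrow> \<exists>r\<in>R. y = r \<or> 1 \<le> v (y - r)"
    and "x \<in> val_ring v"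
  shows "\<exists>d w. (\<forall>k<t. d k \<in> R) \<and> w \<in> val_ring v \<and> x = (\<Sum>k<t. d k * \<pi> ^ k) + \<pi> ^ t * w"
proof (induction t)
  case 0
  then show ?case using \<open>x \<in> val_ring v\<close> by auto
next
  case (Suc t)
  then obtain d w where d: "\<forall>k<t. d k \<in> R" and "w \<in> val_ring v"
    and x: "x = (\<Sum>k<t. d k * \<pi> ^ k) + \<pi> ^ t * w" by blast
  then obtain r where "r \<in> R" and "w = r \<or> 1 \<le> v (w - r)" using R by blast
  then have w': "(w - r) / \<pi> \<in> val_ring v"
    using assms(1,2) by (intro divide_uniformizer_in_val_ring) auto
  have "(\<Sum>k<Suc t. (d(t := r)) k * \<pi> ^ k) = (\<Sum>k<t. d k * \<pi> ^ k) + r * \<pi> ^ t"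
    by simp
  moreover have "\<pi> ^ t * w = r * \<pi> ^ t + \<pi> ^ Suc t * ((w - r) / \<pi>)"
    using \<open>\<pi> \<noteq> 0\<close> by (simp add: field_simps)
  ultimately have "x = (\<Sum>k<Suc t. (d(t := r)) k * \<pi> ^ k) + \<pi> ^ Suc t * ((w - r) / \<pi>)"
    using x by simp
  moreover have "\<forall>k<Suc t. (d(t := r)) k \<in> R" using d \<open>r \<in> R\<close> by simp
  ultimately show ?case using w' by blast
qed

lemma uniformizer_digits:
  assumes "v \<pi> = 1" "\<pi> \<noteq> 0" and R: "\<And>y. y \<in> val_ring v \<Longrightarrow> \<exists>r\<in>R. y = r \<or> 1 \<le> v (y - r)"
    and "Z \<subseteq> val_ring v"
  obtains d w where "\<And>x k. x \<in> Z \<Longrightarrow> k < t \<Longrightarrow> d x k \<in> R" "\<And>x. x \<in> Z \<Longrightarrow> w x \<in> val_ring v"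
    "\<And>x. x \<in> Z \<Longrightarrow> x = (\<Sum>k<t. d x k * \<pi> ^ k) + \<pi> ^ t * w x"
proof -
  have "\<forall>x\<in>Z. \<exists>d w. (\<forall>k<t. d k \<in> R) \<and> w \<in> val_ring v \<and> x = (\<Sum>k<t. d k * \<pi> ^ k) + \<pi> ^ t * w"
    using uniformizer_expansion[OF assms(1,2) R] \<open>Z \<subseteq> val_ring v\<close> by blast
  from bchoice[OF this] obtain d where
    "\<forall>x\<in>Z. \<exists>w. (\<forall>k<t. d x k \<in> R) \<and> w \<in> val_ring v \<and> x = (\<Sum>k<t. d x k * \<pi> ^ k) + \<pi> ^ t * w" ..
  from bchoice[OF this] obtain w where
    "\<forall>x\<in>Z. (\<forall>k<t. d x k \<in> R) \<and> w x \<in> val_ring v \<and> x = (\<Sum>k<t. d x k * \<pi> ^ k) + \<pi> ^ t * w x" ..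
  then show ?thesis using that by blast
qed

lemma val_diff_ge_if_dvd_power:
  assumes "v \<pi> = 1" "\<pi> \<noteq> 0" "x - y = \<pi> ^ t * z" "z \<in> val_ring v" "x \<noteq> y"
  shows "int t \<le> v (x - y)"
proof -
  have "z \<noteq> 0" using assms(3,5) by auto
  then have "v (x - y) = int t + v z"
    unfolding assms(3) using assms(1,2) by (simp add: val_mult val_power)
  moreover have "0 \<le> v z" using \<open>z \<in> val_ring v\<close> \<open>z \<noteq> 0\<close> by (simp add: val_ring_def)
  ultimately show ?thesis by simp
qed

lemma card_le_power_if_val_diff_le:
  assumes "finite (residue_field v)" "Z \<subseteq> val_ring v"
    and close: "\<And>x y. x \<in> Z \<Longrightarrow> y \<in> Z \<Longrightarrow> x \<noteq> y \<Longrightarrow> v (x - y) \<le> int m"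
  shows "card Z \<le> card (residue_field v) ^ Suc m"
proof -
  obtain \<pi> where "\<pi> \<noteq> 0" "v \<pi> = 1"
    using valuation unfolding normalized_discrete_valuation_def by blast
  obtain R where "finite R" "card R \<le> card (residue_field v)"
    and R: "\<And>y. y \<in> val_ring v \<Longrightarrow> \<exists>r\<in>R. y = r \<or> 1 \<le> v (y - r)"
    using residue_representatives[OF assms(1)] by blast
  obtain d w where digits: "\<And>x k. x \<in> Z \<Longrightarrow> k < Suc m \<Longrightarrow> d x k \<in> R"
    and w: "\<And>x. x \<in> Z \<Longrightarrow> w x \<in> val_ring v"
    and expansion: "\<And>x. x \<in> Z \<Longrightarrow> x = (\<Sum>k<Suc m. d x k * \<pi> ^ k) + \<pi> ^ Suc m * w x"
    using uniformizer_digits[OF \<open>v \<pi> = 1\<close> \<open>\<pi> \<noteq> 0\<close> R \<open>Z \<subseteq> val_ring v\<close>] by blast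
  define D where "D x = restrict (d x) {..<Suc m}" for x
  have "inj_on D Z"
  proof (rule inj_onI, rule ccontr)
    fix x y assume "x \<in> Z" "y \<in> Z" "D x = D y" "x \<noteq> y"
    have "d x k = d y k" if "k < Suc m" for k
      using fun_cong[OF \<open>D x = D y\<close>, of k] that by (simp add: D_def)
    then have "(\<Sum>k<Suc m. d x k * \<pi> ^ k) = (\<Sum>k<Suc m. d y k * \<pi> ^ k)" by simp
    then have "x - y = \<pi> ^ Suc m * (w x - w y)"
      by (subst expansion[OF \<open>x \<in> Z\<close>], subst expansion[OF \<open>y \<in> Z\<close>]) (simp add: right_diff_distrib)
    from val_diff_ge_if_dvd_power[OF \<open>v \<pi> = 1\<close> \<open>\<pi> \<noteq> 0\<close> this
        val_ring_diff[OF w[OF \<open>x \<in> Z\<close>] w[OF \<open>y \<in> Z\<close>]] \<open>x \<noteq> y\<close>]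
    have "int (Suc m) \<le> v (x - y)" .
    then show False using close[OF \<open>x \<in> Z\<close> \<open>y \<in> Z\<close> \<open>x \<noteq> y\<close>] by simp
  qed
  moreover have "D ` Z \<subseteq> {..<Suc m} \<rightarrow>\<^sub>E R"
    using digits unfolding D_def by (intro image_subsetI) (simp add: restrict_PiE_iff)
  then have "card (D ` Z) \<le> card ({..<Suc m} \<rightarrow>\<^sub>E R)"
    using \<open>finite R\<close> by (intro card_mono finite_PiE) auto
  ultimately have "card Z \<le> card ({..<Suc m} \<rightarrow>\<^sub>E R)"
    by (simp add: card_image)
  also have "\<dots> \<le> card (residue_field v) ^ Suc m"
    using \<open>card R \<le> card (residue_field v)\<close> by (simp add: card_PiE power_mono del: power_Suc)
  finally show ?thesis .
qed

end

theorem corollary3p3: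
  fixes v :: "'a::field \<Rightarrow> int" and q :: nat and f :: "'a poly"
  assumes "normalized_discrete_valuation v"
    and "val_complete v"
    and "finite (residue_field v)" and "card (residue_field v) = q"
    and "\<forall>i. coeff f i \<in> val_ring v"
    and "monic f"
    and "resultant f (pderiv f) \<noteq> 0"
  shows "card {x. poly f x = 0} \<le> q ^ (nat (v (resultant f (pderiv f)) div 2) + 1)"
proof -
  note valuation = assms(1) and coeffs = assms(5)[rule_format]
  let ?\<Delta> = "resultant f (pderiv f)"
  have "?\<Delta> \<in> val_ring v"
    by (intro resultant_in_val_ring coeff_pderiv_in_val_ring valuation coeffs)
  then have "0 \<le> v ?\<Delta>" using assms(7) by (simp add: val_ring_def)
  have "card {x. poly f x = 0} \<le> card (residue_field v) ^ Suc (nat (v ?\<Delta> div 2))"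
  proof (rule card_le_power_if_val_diff_le[OF valuation assms(3)])
    show "{x. poly f x = 0} \<subseteq> val_ring v"
      using root_in_val_ring[OF valuation coeffs \<open>monic f\<close>] by blast
    fix x y assume "x \<in> {x. poly f x = 0}" "y \<in> {x. poly f x = 0}" "x \<noteq> y"
    then have "2 * v (x - y) \<le> v ?\<Delta>"
      using val_diff_roots_le[OF valuation coeffs \<open>monic f\<close> assms(7)] by blast
    then show "v (x - y) \<le> int (nat (v ?\<Delta> div 2))" using \<open>0 \<le> v ?\<Delta>\<close> by linarith
  qed
  then show ?thesis using assms(4) by simp
qed

end
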